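(* Let $n\in\mathbb N$. The eigenvalues of $n(\mathfrak P^{(n)}_3+\mathfrak P^{(n)}_4)$ are exactly $0,2,4,\dots,2n-2$ if $n$ is odd, and exactly $1,3,5,\dots,2n-1$ if $n$ is even; in particular, all $n$ eigenvalues are simple.
   Context: For $n\in\mathbb N$, $\mathfrak P^{(n)}_1,\dots,\mathfrak P^{(n)}_4\in M_n(\mathbb R)$ denote orthogonal projections (real symmetric idempotent matrices) such that (i) $\mathfrak P^{(n)}_1+\dots+\mathfrak P^{(n)}_4=(2-\frac1n)I_n$; (ii) $\operatorname{rk}\mathfrak P^{(n)}_1=\lfloor\frac n2\rfloor-(-1)^n$ and $\operatorname{rk}\mathfrak P^{(n)}_i=\lfloor\frac n2\rfloor$ for $i=2,3,4$; (iii) the only subspaces of $\mathbb C^n$ invariant under all four matrices are $0$ and $\mathbb C^n$. Such quadruples exist for every $n$, and any two of them are simultaneously unitarily equivalent; moreover, any quadruple of orthogonal projections on a Hilbert space summing to $(2-\frac1n)I$ with no nontrivial common invariant closed subspace is unitarily equivalent to one of the four cyclic shifts $(\mathfrak P^{(n)}_{\sigma(1)},\dots,\mathfrak P^{(n)}_{\sigma(4)})$, $\sigma$ a power of the cycle $(1\,2\,3\,4)$, and these four are pairwise inequivalent. *)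

theory Defs
  imports "HOL-Analysis.Analysis"
begin

definition orth_proj :: "real^'n^'n \<Rightarrow> bool" where
  "orth_proj P \<longleftrightarrow> transpose P = P \<and> P ** P = P"

text \<open>The only (complex-linear) subspaces of C^n invariant under all matrices
  of the family are 0 and C^n.\<close>
definition irreducible_family :: "(real^'n^'n) set \<Rightarrow> bool" where
  "irreducible_family Ps \<longleftrightarrow>
     (\<forall>V :: (complex^'n) set.
        vec.subspace V \<and> (\<forall>P\<in>Ps. \<forall>v\<in>V. map_matrix complex_of_real P *v v \<in> V)
        \<longrightarrow> V = {0} \<or> V = UNIV)"

definition is_eigenvalue :: "real^'n^'n \<Rightarrow> real \<Rightarrow> bool" where
  "is_eigenvalue A c \<longleftrightarrow> (\<exists>v. v \<noteq> 0 \<and> A *v v = c *s v)"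

end

theory Submission
  imports Defs
begin

text \<open>
  If P, Q are orthogonal projections and (P + Q) u = \<mu> u, then (P - Q) u is an eigenvector of
  P + Q for 2 - \<mu> with squared norm \<mu> (2 - \<mu>) |u|^2. As P1 + P2 = c - (P3 + P4) with
  c = 2 - 1/n, the composite (P3 - P4)(P1 - P2) raises eigenvalues of P3 + P4 by 4 - 2c = 2/n,
  and the norm formula shows that it kills no vector of the chain starting at eigenvalue 0 before
  n steps. The rank conditions give a kernel vector of P3 + P4 for odd n, and of P1 + P2 for
  even n (then the chain descends from c). The n distinct eigenvalues so obtained exhaust the
  spectrum of the symmetric matrix P3 + P4.
\<close>

lemma rank_add_le:
  fixes A B :: "real^'n^'m"
  shows "rank (A + B) \<le> rank A + rank B"
proof -
  let ?RA = "range ((*v) A)" and ?RB = "range ((*v) B)"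
  have sub: "subspace ?RA" "subspace ?RB"
    by (simp_all add: subspace_UNIV linear_subspace_image)
  have "range ((*v) (A + B)) \<subseteq> {x + y |x y. x \<in> ?RA \<and> y \<in> ?RB}"
    by (auto simp: matrix_vector_mult_add_rdistrib)
  then have "rank (A + B) \<le> dim {x + y |x y. x \<in> ?RA \<and> y \<in> ?RB}"
    by (simp add: rank_dim_range dim_subset)
  also have "\<dots> \<le> dim ?RA + dim ?RB"
    using dim_sums_Int[OF sub] by linarith
  finally show ?thesis by (simp add: rank_dim_range)
qed

lemma transpose_add: "transpose (A + B) = transpose A + transpose (B :: 'a::plus^'n^'m)"
  by (simp add: transpose_def vec_eq_iff)

lemma orth_proj_idem:
  fixes P :: "real^'n^'n"
  assumes "orth_proj P"
  shows "P *v (P *v u) = P *v u"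
  using assms by (simp add: orth_proj_def matrix_vector_mul_assoc)

lemma symmetric_matrix_inner_commute:
  fixes S :: "real^'n^'n"
  assumes "transpose S = S"
  shows "inner (S *v u) w = inner u (S *v w)"
  by (metis assms dot_lmul_matrix transpose_matrix_vector)

lemma orth_proj_inner_commute:
  fixes P :: "real^'n^'n"
  assumes "orth_proj P"
  shows "inner (P *v u) w = inner u (P *v w)"
  using assms by (simp add: orth_proj_def symmetric_matrix_inner_commute)

lemma orth_proj_pair_reflection:
  fixes P Q :: "real^'n^'n"
  assumes P: "orth_proj P" and Q: "orth_proj Q"
    and eig: "(P + Q) *v u = \<mu> *\<^sub>R u"
  shows "(P + Q) *v ((P - Q) *v u) = (2 - \<mu>) *\<^sub>R ((P - Q) *v u)"
    and "inner ((P - Q) *v u) ((P - Q) *v u) = \<mu> * (2 - \<mu>) * inner u u"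
proof -
  define d where "d = (P - Q) *v u"
  have anticomm: "(P + Q) *v d + (P - Q) *v ((P + Q) *v u) = 2 *\<^sub>R d"
    unfolding d_def
    by (simp add: algebra_simps orth_proj_idem[OF P] orth_proj_idem[OF Q] scaleR_2)
  have "(P + Q) *v d = 2 *\<^sub>R d - (P - Q) *v ((P + Q) *v u)"
    using anticomm by (simp only: eq_diff_eq)
  also have "\<dots> = (2 - \<mu>) *\<^sub>R d"
    by (simp only: eig matrix_vector_mult_scaleR d_def scaleR_diff_left)
  finally show "(P + Q) *v ((P - Q) *v u) = (2 - \<mu>) *\<^sub>R ((P - Q) *v u)"
    unfolding d_def .
  have squares: "(P - Q) *v d + (P + Q) *v ((P + Q) *v u) = 2 *\<^sub>R ((P + Q) *v u)"
    unfolding d_def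
    by (simp add: algebra_simps orth_proj_idem[OF P] orth_proj_idem[OF Q] scaleR_2)
  have "(P - Q) *v d = 2 *\<^sub>R ((P + Q) *v u) - (P + Q) *v ((P + Q) *v u)"
    using squares by (simp only: eq_diff_eq)
  also have "\<dots> = (2 * \<mu> - \<mu> * \<mu>) *\<^sub>R u"
    by (simp only: eig matrix_vector_mult_scaleR scaleR_scaleR scaleR_diff_left)
  finally have dd: "(P - Q) *v d = (2 * \<mu> - \<mu> * \<mu>) *\<^sub>R u" .
  have "inner d d = inner u ((P - Q) *v d)"
    by (simp add: d_def matrix_vector_mult_diff_rdistrib matrix_vector_mult_diff_distrib
        inner_diff_left inner_diff_right orth_proj_inner_commute[OF P] orth_proj_inner_commute[OF Q])
  also have "\<dots> = \<mu> * (2 - \<mu>) * inner u u"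
    by (simp only: dd inner_scaleR_right) (simp add: algebra_simps)
  finally show "inner ((P - Q) *v u) ((P - Q) *v u) = \<mu> * (2 - \<mu>) * inner u u"
    unfolding d_def .
qed

lemma sum_eq_scaled_identity_mult_vector:
  fixes A B :: "real^'n^'n"
  assumes "A + B = c *\<^sub>R mat 1"
  shows "B *v x = c *\<^sub>R x - A *v x"
proof -
  have "A *v x + B *v x = c *\<^sub>R x"
    by (simp add: assms flip: matrix_vector_mult_add_rdistrib scaleR_matrix_vector_assoc)
  then show ?thesis by (simp add: eq_diff_eq add.commute)
qed

lemma orth_proj_quadruple_ladder_step:
  fixes P1 P2 P3 P4 :: "real^'n^'n"
  assumes P1: "orth_proj P1" and P2: "orth_proj P2" and P3: "orth_proj P3" and P4: "orth_proj P4"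
    and sum: "P1 + P2 + P3 + P4 = c *\<^sub>R mat 1"
    and eig: "(P3 + P4) *v u = m *\<^sub>R u"
  shows "(P3 + P4) *v ((P3 - P4) *v ((P1 - P2) *v u))
           = (m + 4 - 2 * c) *\<^sub>R ((P3 - P4) *v ((P1 - P2) *v u))"
    and "inner ((P3 - P4) *v ((P1 - P2) *v u)) ((P3 - P4) *v ((P1 - P2) *v u))
           = (c - m) * (2 - (c - m)) * ((2 * c - 2 - m) * (2 - (2 * c - 2 - m))) * inner u u"
proof -
  have "(P1 + P2) + (P3 + P4) = c *\<^sub>R mat 1" "(P3 + P4) + (P1 + P2) = c *\<^sub>R mat 1"
    using sum by (simp_all add: ac_simps)
  note A = sum_eq_scaled_identity_mult_vector[OF this(2)]
    and B = sum_eq_scaled_identity_mult_vector[OF this(1)]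
  have "(P1 + P2) *v u = (c - m) *\<^sub>R u"
    by (simp add: A eig scaleR_diff_left)
  note X = orth_proj_pair_reflection[OF P1 P2 this]
  have "(P3 + P4) *v ((P1 - P2) *v u) = (c - (2 - (c - m))) *\<^sub>R ((P1 - P2) *v u)"
    by (simp only: B X(1) scaleR_diff_left)
  also have "c - (2 - (c - m)) = 2 * c - 2 - m" by simp
  finally have "(P3 + P4) *v ((P1 - P2) *v u) = (2 * c - 2 - m) *\<^sub>R ((P1 - P2) *v u)" .
  note Y = orth_proj_pair_reflection[OF P3 P4 this]
  have "2 - (2 * c - 2 - m) = m + 4 - 2 * c" by simp
  with Y(1) show "(P3 + P4) *v ((P3 - P4) *v ((P1 - P2) *v u))
           = (m + 4 - 2 * c) *\<^sub>R ((P3 - P4) *v ((P1 - P2) *v u))" by simp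
  show "inner ((P3 - P4) *v ((P1 - P2) *v u)) ((P3 - P4) *v ((P1 - P2) *v u))
           = (c - m) * (2 - (c - m)) * ((2 * c - 2 - m) * (2 - (2 * c - 2 - m))) * inner u u"
    using Y(2) X(2) by simp
qed

lemma orth_proj_quadruple_ladder_up:
  fixes P1 P2 P3 P4 :: "real^'n^'n"
  assumes proj: "orth_proj P1" "orth_proj P2" "orth_proj P3" "orth_proj P4"
    and sum: "P1 + P2 + P3 + P4 = (2 - 1 / real n) *\<^sub>R mat 1"
    and rank: "rank P3 + rank P4 < CARD('n)"
  shows "\<exists>u. \<forall>j<n. u j \<noteq> 0 \<and> (P3 + P4) *v u j = (real (2 * j) / real n) *\<^sub>R u j"
proof -
  obtain v where v: "v \<noteq> 0" "(P3 + P4) *v v = 0"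
    using rank_add_le[of P3 P4] rank matrix_nonfull_linear_equations_eq by fastforce
  define u where "u j = ((\<lambda>w. (P3 - P4) *v ((P1 - P2) *v w)) ^^ j) v" for j
  note step = orth_proj_quadruple_ladder_step[OF proj sum]
  have eig: "(P3 + P4) *v u j = (real (2 * j) / real n) *\<^sub>R u j" for j
  proof (induction j)
    case 0
    show ?case using v(2) by (simp add: u_def)
  next
    case (Suc j)
    have "real (2 * j) / real n + 4 - 2 * (2 - 1 / real n) = real (2 * Suc j) / real n"
      by (simp add: add_divide_distrib algebra_simps)
    then show ?case using step(1)[OF Suc.IH] by (simp add: u_def)
  qed
  have "u j \<noteq> 0" if "j < n" for j
    using that
  proof (induction j)
    case 0
    show ?case using v(1) by (simp add: u_def)
  next
    case (Suc j)
    define c where "c = 2 - 1 / real n"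
    define m where "m = real (2 * j) / real n"
    have n: "0 < real n" using Suc.prems by simp
    have pos: "0 < (2 - t) * (2 - (2 - t))" if "0 < t" "t < 2" for t :: real
      using that by simp
    have "c - m = 2 - real (2 * j + 1) / real n" "2 * c - 2 - m = 2 - real (2 * j + 2) / real n"
      by (simp_all add: c_def m_def add_divide_distrib diff_divide_distrib)
    moreover have "0 < real (2 * j + 1) / real n" "real (2 * j + 1) / real n < 2"
      "0 < real (2 * j + 2) / real n" "real (2 * j + 2) / real n < 2"
      using n Suc.prems by (simp_all add: divide_less_eq)
    ultimately have "0 < (c - m) * (2 - (c - m))" "0 < (2 * c - 2 - m) * (2 - (2 * c - 2 - m))"
      using pos by metis+
    then have "0 < (c - m) * (2 - (c - m)) * ((2 * c - 2 - m) * (2 - (2 * c - 2 - m)))"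
      by simp
    moreover have "0 < inner (u j) (u j)"
      using Suc by simp
    ultimately have "0 < inner (u (Suc j)) (u (Suc j))"
      using step(2)[OF eig[of j]] by (simp add: u_def c_def m_def)
    then show ?case by auto
  qed
  with eig show ?thesis by blast
qed

lemma orth_proj_quadruple_ladder_down:
  fixes P1 P2 P3 P4 :: "real^'n^'n"
  assumes proj: "orth_proj P1" "orth_proj P2" "orth_proj P3" "orth_proj P4"
    and sum: "P1 + P2 + P3 + P4 = (2 - 1 / real n) *\<^sub>R mat 1"
    and rank: "rank P1 + rank P2 < CARD('n)"
  shows "\<exists>u. \<forall>k<n. u k \<noteq> 0 \<and> (P3 + P4) *v u k = (real (2 * k + 1) / real n) *\<^sub>R u k"
proof -
  have sum': "P3 + P4 + P1 + P2 = (2 - 1 / real n) *\<^sub>R mat 1"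
    using sum by (simp add: ac_simps)
  obtain w where w: "\<And>j. j < n \<Longrightarrow>
      w j \<noteq> 0 \<and> (P1 + P2) *v w j = (real (2 * j) / real n) *\<^sub>R w j"
    using orth_proj_quadruple_ladder_up[OF proj(3,4,1,2) sum' rank] by blast
  have "(P3 + P4) *v w (n - 1 - k) = (real (2 * k + 1) / real n) *\<^sub>R w (n - 1 - k)"
    if "k < n" for k
  proof -
    have "(P1 + P2) + (P3 + P4) = (2 - 1 / real n) *\<^sub>R mat 1"
      using sum by (simp add: ac_simps)
    then have "(P3 + P4) *v w (n - 1 - k)
        = (2 - 1 / real n) *\<^sub>R w (n - 1 - k) - (P1 + P2) *v w (n - 1 - k)"
      by (rule sum_eq_scaled_identity_mult_vector)
    also have "\<dots> = (2 - 1 / real n - real (2 * (n - 1 - k)) / real n) *\<^sub>R w (n - 1 - k)"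
      using w[of "n - 1 - k"] that by (simp add: scaleR_diff_left)
    also have "2 - 1 / real n - real (2 * (n - 1 - k)) / real n = real (2 * k + 1) / real n"
      using that by (simp add: of_nat_diff field_simps)
    finally show ?thesis .
  qed
  with w show ?thesis
    by (intro exI[of _ "\<lambda>k. w (n - 1 - k)"]) auto
qed

lemma is_eigenvalue_iff_det_eq_0:
  fixes M :: "real^'n^'n"
  shows "is_eigenvalue M c \<longleftrightarrow> det (c *\<^sub>R mat 1 - M) = 0"
proof -
  have "M *v v = c *s v \<longleftrightarrow> (c *\<^sub>R mat 1 - M) *v v = 0" for v
    by (auto simp: matrix_vector_mult_diff_rdistrib scalar_mult_eq_scaleR
        simp flip: scaleR_matrix_vector_assoc)
  then have "is_eigenvalue M c \<longleftrightarrow> rank (c *\<^sub>R mat 1 - M) \<noteq> CARD('n)"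
    unfolding is_eigenvalue_def by (simp add: matrix_nonfull_linear_equations_eq [symmetric])
  also have "\<dots> \<longleftrightarrow> det (c *\<^sub>R mat 1 - M) = 0"
    using rank_bound[of "c *\<^sub>R mat 1 - M"] by (auto simp: det_eq_0_rank)
  finally show ?thesis .
qed

lemma det_char_matrix_orthogonal_eigenbasis:
  fixes M :: "real^'n^'n" and f :: "'n \<Rightarrow> real^'n" and d :: "'n \<Rightarrow> real"
  assumes eig: "\<And>j. M *v f j = d j *\<^sub>R f j" and nz: "\<And>j. f j \<noteq> 0"
    and orth: "\<And>i j. i \<noteq> j \<Longrightarrow> inner (f i) (f j) = 0"
  shows "det (x *\<^sub>R mat 1 - M) = (\<Prod>j\<in>UNIV. x - d j)"
proof -
  define Q :: "real^'n^'n" where "Q = (\<chi> i j. f j $ i)"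
  define E :: "real^'n^'n" where "E = (\<chi> i j. if i = j then x - d i else 0)"
  have Q: "Q *v c = (\<Sum>j\<in>UNIV. c $ j *\<^sub>R f j)" for c
    by (simp add: vec_eq_iff Q_def matrix_vector_mult_def sum_component mult.commute)
  have E: "E *v c = (\<chi> j. (x - d j) * c $ j)" for c
    by (simp add: vec_eq_iff E_def matrix_vector_mult_def if_distrib[of "\<lambda>t. t * _"] cong: if_cong)
  have "c = 0" if "Q *v c = 0" for c
  proof -
    have "c $ k * inner (f k) (f k) = 0" for k
    proof -
      have "0 = inner (f k) (Q *v c)" using that by simp
      also have "\<dots> = (\<Sum>j\<in>UNIV. c $ j * inner (f k) (f j))"
        by (simp add: Q inner_sum_right)
      also have "\<dots> = c $ k * inner (f k) (f k)"
        by (subst sum.remove[of UNIV k]) (auto simp: orth)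
      finally show ?thesis by simp
    qed
    with nz show ?thesis by (metis vec_eq_iff zero_index inner_eq_zero_iff mult_eq_0_iff)
  qed
  then have "det Q \<noteq> 0"
    using matrix_nonfull_linear_equations_eq[of Q] by (auto simp: det_eq_0_rank)
  have "(x *\<^sub>R mat 1 - M) ** Q = Q ** E"
  proof -
    have "((x *\<^sub>R mat 1 - M) ** Q) *v c = (Q ** E) *v c" for c
      by (simp add: matrix_vector_mul_assoc[symmetric] Q E matrix_vector_mult_diff_rdistrib
          scaleR_matrix_vector_assoc[symmetric] linear_sum[OF matrix_vector_mul_linear]
          matrix_vector_mult_scaleR eig scaleR_right.sum sum_subtractf algebra_simps)
    then show ?thesis by (simp add: matrix_eq)
  qed
  then have "det (x *\<^sub>R mat 1 - M) * det Q = det Q * det E"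
    by (metis det_mul)
  with \<open>det Q \<noteq> 0\<close> have "det (x *\<^sub>R mat 1 - M) = det E" by simp
  also have "\<dots> = (\<Prod>j\<in>UNIV. x - d j)"
    by (subst det_diagonal) (auto simp: E_def)
  finally show ?thesis .
qed

lemma symmetric_matrix_simple_spectrum:
  fixes M :: "real^'n^'n" and u :: "nat \<Rightarrow> real^'n" and \<mu> :: "nat \<Rightarrow> real"
  assumes sym: "transpose M = M" and n: "n = CARD('n)"
    and eig: "\<And>k. k < n \<Longrightarrow> u k \<noteq> 0 \<and> M *v u k = \<mu> k *\<^sub>R u k"
    and inj: "inj_on \<mu> {..<n}"
  shows "det (x *\<^sub>R mat 1 - M) = (\<Prod>k<n. x - \<mu> k)"
    and "{c. is_eigenvalue M c} = \<mu> ` {..<n}"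
proof -
  obtain g where g: "bij_betw g (UNIV :: 'n set) {..<n}"
    using ex_bij_betw_finite_nat[of "UNIV :: 'n set"] n by (auto simp: atLeast0LessThan)
  then have g_lt: "g j < n" for j
    by (auto dest: bij_betwE)
  have orth: "inner (u (g i)) (u (g j)) = 0" if "i \<noteq> j" for i j
  proof -
    have "\<mu> (g i) \<noteq> \<mu> (g j)"
      using that g inj g_lt by (metis UNIV_I bij_betw_imp_inj_on inj_onD lessThan_iff)
    moreover have "\<mu> (g i) * inner (u (g i)) (u (g j)) = \<mu> (g j) * inner (u (g i)) (u (g j))"
      using symmetric_matrix_inner_commute[OF sym, of "u (g i)" "u (g j)"] eig[OF g_lt] by simp
    ultimately show ?thesis by simp
  qed
  have det: "det (y *\<^sub>R mat 1 - M) = (\<Prod>k<n. y - \<mu> k)" for y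
    using det_char_matrix_orthogonal_eigenbasis[of M "u \<circ> g" "\<mu> \<circ> g" y] eig[OF g_lt] orth
      prod.reindex_bij_betw[OF g, of "\<lambda>k. y - \<mu> k"] by simp
  then show "det (x *\<^sub>R mat 1 - M) = (\<Prod>k<n. x - \<mu> k)" .
  show "{c. is_eigenvalue M c} = \<mu> ` {..<n}"
    by (auto simp: is_eigenvalue_iff_det_eq_0 det)
qed

theorem proposition4p4:
  fixes P1 P2 P3 P4 :: "real^'n^'n" and n :: nat
  assumes n_def: "n = CARD('n)"
    and proj: "orth_proj P1" "orth_proj P2" "orth_proj P3" "orth_proj P4"
    and sum: "P1 + P2 + P3 + P4 = (2 - 1 / real n) *\<^sub>R mat 1"
    and rk1: "int (rank P1) = \<lfloor>real n / 2\<rfloor> - (-1) ^ n"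
    and rk2: "int (rank P2) = \<lfloor>real n / 2\<rfloor>"
    and rk3: "int (rank P3) = \<lfloor>real n / 2\<rfloor>"
    and rk4: "int (rank P4) = \<lfloor>real n / 2\<rfloor>"
    and irr: "irreducible_family {P1, P2, P3, P4}"
  shows "(odd n \<longrightarrow> {c. is_eigenvalue (real n *\<^sub>R (P3 + P4)) c}
                      = {real (2 * k) | k. k < n})
       \<and> (even n \<longrightarrow> {c. is_eigenvalue (real n *\<^sub>R (P3 + P4)) c}
                      = {real (2 * k + 1) | k. k < n})
       \<and> (\<forall>x::real. det (x *\<^sub>R mat 1 - real n *\<^sub>R (P3 + P4))
              = (\<Prod>k<n. x - real (2 * k + (if odd n then 0 else 1))))"
proof -
  have n_pos: "0 < n" using n_def by simp
  have half: "\<lfloor>real n / 2\<rfloor> = int (n div 2)"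
    using floor_divide_of_nat_eq[of n 2] by simp
  have ranks: "rank P2 = n div 2" "rank P3 = n div 2" "rank P4 = n div 2"
    using rk2 rk3 rk4 by (simp_all add: half)
  define e :: nat where "e = (if odd n then 0 else 1)"
  obtain u where u: "\<And>k. k < n \<Longrightarrow>
      u k \<noteq> 0 \<and> (P3 + P4) *v u k = (real (2 * k + e) / real n) *\<^sub>R u k"
  proof (cases "odd n")
    case True
    then have "rank P3 + rank P4 < CARD('n)"
      by (simp add: ranks flip: n_def) presburger
    from orth_proj_quadruple_ladder_up[OF proj sum this] True that show thesis
      by (auto simp: e_def)
  next
    case False
    then have "int (rank P1) + 1 = int (n div 2)"
      using rk1 by (simp add: half)
    with False n_pos have "rank P1 + rank P2 < CARD('n)"
      by (simp add: ranks flip: n_def)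
    from orth_proj_quadruple_ladder_down[OF proj sum this] False that show thesis
      by (auto simp: e_def)
  qed
  define M where "M = real n *\<^sub>R (P3 + P4)"
  have sym: "transpose M = M"
    using proj by (simp add: M_def orth_proj_def transpose_scalar transpose_add)
  have eig: "u k \<noteq> 0 \<and> M *v u k = real (2 * k + e) *\<^sub>R u k" if "k < n" for k
    using u[OF that] n_pos by (simp add: M_def flip: scaleR_matrix_vector_assoc)
  have inj: "inj_on (\<lambda>k. real (2 * k + e)) {..<n}"
    by (auto simp: inj_on_def)
  note spectrum = symmetric_matrix_simple_spectrum[OF sym n_def eig inj]
  show ?thesis
    using spectrum unfolding M_def e_def by (auto simp: image_def)
qed

end
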